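(* Let $p$ be a prime and let $G$ be a $1$-tuple regular finite group of exponent $p^s$ for some $s\in\mathbb{N}$. For all nontrivial $a,b\in G$ we have $\operatorname{ord}([a,b])<\min\{\operatorname{ord}(a),\operatorname{ord}(b)\}$. In particular, if $p$ is odd, then $G$ is a powerful $p$-group.
   Context: $[a,b]=aba^{-1}b^{-1}$. A finite $p$-group $G$ is powerful if $p$ is odd and $G'\subseteq\mho^1(G)$, or $p=2$ and $G'\subseteq\mho^2(G)$, where $\mho^i(G)$ is generated by the $p^i$-th powers. A finite group $G$ is $1$-tuple regular if for all $g_1,h_1\in G$ of the same order there is a bijection $\Psi\colon G\to G$ such that for every $g\in G$ the assignment $g_1\mapsto h_1, g\mapsto\Psi(g)$ defines an isomorphism $\langle g_1,g\rangle\to\langle h_1,\Psi(g)\rangle$. *)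

theory Defs
  imports "HOL-Algebra.Algebra"
begin

definition commutator :: "('a, 'b) monoid_scheme \<Rightarrow> 'a \<Rightarrow> 'a \<Rightarrow> 'a" where
  "commutator G a b = a \<otimes>\<^bsub>G\<^esub> b \<otimes>\<^bsub>G\<^esub> inv\<^bsub>G\<^esub> a \<otimes>\<^bsub>G\<^esub> inv\<^bsub>G\<^esub> b"

definition group_exponent :: "('a, 'b) monoid_scheme \<Rightarrow> nat" where
  "group_exponent G = (LEAST n. 0 < n \<and> (\<forall>x \<in> carrier G. x [^]\<^bsub>G\<^esub> n = \<one>\<^bsub>G\<^esub>))"

definition agemo :: "('a, 'b) monoid_scheme \<Rightarrow> nat \<Rightarrow> nat \<Rightarrow> 'a set" where
  "agemo G p i = generate G {x [^]\<^bsub>G\<^esub> (p ^ i) | x. x \<in> carrier G}"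

definition powerful_p_group :: "('a, 'b) monoid_scheme \<Rightarrow> nat \<Rightarrow> bool" where
  "powerful_p_group G p \<longleftrightarrow>
     finite (carrier G) \<and> (\<exists>k. order G = p ^ k) \<and>
     (if odd p then derived G (carrier G) \<subseteq> agemo G p 1
      else p = 2 \<and> derived G (carrier G) \<subseteq> agemo G p 2)"

definition one_tuple_regular :: "('a, 'b) monoid_scheme \<Rightarrow> bool" where
  "one_tuple_regular G \<longleftrightarrow>
     (\<forall>g1 \<in> carrier G. \<forall>h1 \<in> carrier G. group.ord G g1 = group.ord G h1 \<longrightarrow>
        (\<exists>\<Psi>. bij_betw \<Psi> (carrier G) (carrier G) \<and>
           (\<forall>g \<in> carrier G. \<exists>\<phi>.
               \<phi> \<in> iso (subgroup_generated G {g1, g}) (subgroup_generated G {h1, \<Psi> g}) \<and>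
               \<phi> g1 = h1 \<and> \<phi> g = \<Psi> g)))"

end

theory Submission
  imports Defs
begin

text \<open>
  A finite group of exponent \<open>p^s\<close> is a \<open>p\<close>-group by Cauchy's theorem, hence nilpotent: its
  upper central series reaches \<open>G\<close>. The first claim is proved by induction along this series.
  If \<open>x \<in> Z\<^sub>i\<^sub>+\<^sub>1\<close> but \<open>ord [x,b] \<ge> ord x\<close>, then \<open>[x,b] \<in> Z\<^sub>i\<close> has a power \<open>c\<close> of the same
  order as \<open>x\<close>. Regularity maps \<open>\<langle>x,b\<rangle>\<close> isomorphically onto some \<open>\<langle>c,h\<rangle>\<close> with \<open>x \<mapsto> c\<close>, so
  \<open>ord [c,h] = ord [x,b] \<ge> ord c\<close>, contradicting the induction hypothesis.

  For the second claim, take \<open>y = [a,b]\<close> with \<open>a \<noteq> 1\<close>. Since \<open>ord y < ord a\<close>, \<open>y\<close> has the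
  same order as a \<open>p\<close>-th power \<open>w^p\<close> of a power \<open>w\<close> of \<open>a\<close>. Regularity maps \<open>\<langle>w^p,w\<rangle>\<close> onto
  some \<open>\<langle>y,z\<rangle>\<close> with \<open>w^p \<mapsto> y\<close>, so \<open>y = z^p\<close>. Hence \<open>G' \<subseteq> \<mho>\<^sub>1(G)\<close>.
\<close>

section \<open>Commutators\<close>

lemma (in group) commutator_closed [simp]:
  "x \<in> carrier G \<Longrightarrow> y \<in> carrier G \<Longrightarrow> commutator G x y \<in> carrier G"
  by (simp add: commutator_def)

lemma (in group) inv_commutator:
  "x \<in> carrier G \<Longrightarrow> y \<in> carrier G \<Longrightarrow> inv (commutator G x y) = commutator G y x"
  by (simp add: commutator_def inv_mult_group m_assoc)

lemma (in group) commutator_eq_one_iff: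
  "x \<in> carrier G \<Longrightarrow> y \<in> carrier G \<Longrightarrow> commutator G x y = \<one> \<longleftrightarrow> x \<otimes> y = y \<otimes> x"
  unfolding commutator_def
  by (metis inv_closed inv_mult_group m_closed inv_equality r_inv m_assoc r_one)

lemma (in group) inv_mult_cancel_left:
  "x \<in> carrier G \<Longrightarrow> z \<in> carrier G \<Longrightarrow> inv x \<otimes> (x \<otimes> z) = z"
  by (simp flip: m_assoc)

lemma (in group) mult_inv_cancel_left:
  "x \<in> carrier G \<Longrightarrow> z \<in> carrier G \<Longrightarrow> x \<otimes> (inv x \<otimes> z) = z"
  by (simp flip: m_assoc)

lemma (in group) commutator_mult_left:
  assumes "x \<in> carrier G" "y \<in> carrier G" "g \<in> carrier G"
  shows "commutator G (x \<otimes> y) g = x \<otimes> commutator G y g \<otimes> inv x \<otimes> commutator G x g"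
  using assms by (simp add: commutator_def m_assoc inv_mult_group inv_mult_cancel_left mult_inv_cancel_left)

lemma (in group) commutator_inv_left:
  assumes "x \<in> carrier G" "g \<in> carrier G"
  shows "commutator G (inv x) g = inv x \<otimes> inv (commutator G x g) \<otimes> x"
  using assms by (simp add: commutator_def m_assoc inv_mult_group inv_mult_cancel_left mult_inv_cancel_left)

lemma (in group) commutator_conj_left:
  assumes "x \<in> carrier G" "g \<in> carrier G" "h \<in> carrier G"
  shows "commutator G (h \<otimes> x \<otimes> inv h) g = h \<otimes> commutator G x (inv h \<otimes> g \<otimes> h) \<otimes> inv h"
  using assms by (simp add: commutator_def m_assoc inv_mult_group inv_mult_cancel_left mult_inv_cancel_left)

lemma (in group_hom) hom_commutator:
  "x \<in> carrier G \<Longrightarrow> y \<in> carrier G \<Longrightarrow> h (commutator G x y) = commutator H (h x) (h y)"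
  by (simp add: commutator_def)

lemma (in group) commutator_subgroup_generated:
  "x \<in> carrier (subgroup_generated G S) \<Longrightarrow> y \<in> carrier (subgroup_generated G S) \<Longrightarrow>
   commutator (subgroup_generated G S) x y = commutator G x y"
  by (simp add: commutator_def)

lemma ord_iso:
  assumes "group G" "group H" "f \<in> iso G H" "x \<in> carrier G"
  shows "group.ord H (f x) = group.ord G x"
proof -
  interpret group_hom G H f
    using assms by (simp add: group_hom_def group_hom_axioms_def iso_def)
  have "f x [^]\<^bsub>H\<^esub> n = \<one>\<^bsub>H\<^esub> \<longleftrightarrow> x [^]\<^bsub>G\<^esub> n = \<one>\<^bsub>G\<^esub>" for n :: nat
    using assms(3,4) iso_iff by (auto simp flip: hom_nat_pow)
  then have "f x [^]\<^bsub>H\<^esub> n = \<one>\<^bsub>H\<^esub> \<longleftrightarrow> G.ord x dvd n" for n :: nat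
    using assms(4) by (simp add: G.pow_eq_id)
  then show ?thesis
    using assms(4) by (simp add: H.ord_unique)
qed

lemma (in group) ord_subgroup_generated:
  "group.ord (subgroup_generated G S) x = ord x"
  by (simp add: group.ord_def pow_subgroup_generated)

lemma (in group) ord_iso_subgroup_generated:
  assumes "\<phi> \<in> iso (subgroup_generated G S) (subgroup_generated G T)"
    and "x \<in> carrier (subgroup_generated G S)"
  shows "ord (\<phi> x) = ord x"
  using ord_iso[OF group_subgroup_generated group_subgroup_generated assms]
  by (simp add: ord_subgroup_generated)

lemma (in group) hom_subgroup_generated_commutator:
  assumes "\<phi> \<in> hom (subgroup_generated G S) (subgroup_generated G T)"
    and "x \<in> carrier (subgroup_generated G S)" "y \<in> carrier (subgroup_generated G S)"
  shows "\<phi> (commutator G x y) = commutator G (\<phi> x) (\<phi> y)"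
proof -
  interpret group_hom "subgroup_generated G S" "subgroup_generated G T" \<phi>
    using assms(1) by (simp add: group_hom_def group_hom_axioms_def)
  show ?thesis
    using assms(2,3) hom_commutator
    by (simp add: commutator_subgroup_generated group.commutator_subgroup_generated)
qed

lemma (in group) hom_subgroup_generated_nat_pow:
  assumes "\<phi> \<in> hom (subgroup_generated G S) (subgroup_generated G T)"
    and "x \<in> carrier (subgroup_generated G S)"
  shows "\<phi> (x [^] (n::nat)) = \<phi> x [^] n"
  using hom_nat_pow[OF assms group_subgroup_generated group_subgroup_generated]
  by (simp add: pow_subgroup_generated)

section \<open>Finite \<open>p\<close>-groups\<close>

lemma (in group) finite_carrier_if_order_eq_prime_power:
  "Factorial_Ring.prime (p::nat) \<Longrightarrow> order G = p ^ n \<Longrightarrow> finite (carrier G)"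
  using order_gt_0_iff_finite by (simp add: prime_gt_0_nat)

lemma (in group) ord_dvd_group_exponent:
  assumes "finite (carrier G)" "x \<in> carrier G"
  shows "ord x dvd group_exponent G"
proof -
  have "0 < group_exponent G \<and> (\<forall>x \<in> carrier G. x [^] group_exponent G = \<one>)"
    unfolding group_exponent_def
    by (rule LeastI[of _ "order G"]) (use assms order_gt_0_iff_finite pow_order_eq_1 in blast)
  then show ?thesis
    using assms(2) pow_eq_id by blast
qed

lemma (in group) cauchy_theorem:
  assumes "finite (carrier G)" "Factorial_Ring.prime (q::nat)" "q dvd order G"
  obtains x where "x \<in> carrier G" "ord x = q"
proof -
  obtain m where "order G = q ^ 1 * m"
    using assms(3) by auto
  then obtain H where H: "subgroup H G" "card H = q"
    using sylow_thm[OF assms(2) is_group _ assms(1)] by fastforce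
  then obtain x where x: "x \<in> H" "x \<noteq> \<one>"
    using prime_ge_2_nat[OF assms(2)] card_mono[of "{\<one>}" H] by fastforce
  have xG: "x \<in> carrier G"
    using subgroup.subset[OF H(1)] x(1) by blast
  interpret H: group "subgroup_generated G H"
    by simp
  have carrier_H: "carrier (subgroup_generated G H) = H"
    using H(1) subgroup.carrier_subgroup_generated_subgroup by blast
  have "ord x dvd q"
    using H.ord_dvd_group_order[of x] x(1) H(2)
    by (simp add: carrier_H order_def ord_subgroup_generated)
  moreover have "ord x \<noteq> 1"
    using ord_eq_1[OF xG] x(2) by simp
  ultimately have "ord x = q"
    using assms(2) prime_nat_iff by blast
  with xG that show ?thesis
    by blast
qed

lemma (in group) order_eq_prime_power_if_group_exponent:
  assumes "finite (carrier G)" "Factorial_Ring.prime (p::nat)" "group_exponent G = p ^ s"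
  obtains n where "order G = p ^ n"
proof (rule ccontr)
  assume "\<not> thesis"
  then have "\<not> (\<exists>n. normalize (order G) = p ^ n)"
    using that by auto
  then obtain q where q: "q \<in> prime_factors (order G)" "q \<noteq> p"
    using Ex_other_prime_factor[OF _ _ assms(2)] assms(1) order_gt_0_iff_finite by blast
  then have "Factorial_Ring.prime q" "q dvd order G"
    by (auto simp: in_prime_factors_iff)
  then obtain x where "x \<in> carrier G" "ord x = q"
    using cauchy_theorem[OF assms(1)] by blast
  then have "q dvd p ^ s"
    using ord_dvd_group_exponent[OF assms(1)] assms(3) by metis
  then have "q = p"
    using \<open>Factorial_Ring.prime q\<close> assms(2) by (metis prime_dvd_power primes_dvd_imp_eq)
  with q(2) show False ..
qed

lemma (in group) p_group_ord_eq_prime_power: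
  assumes "Factorial_Ring.prime (p::nat)" "order G = p ^ n" "x \<in> carrier G"
  obtains k where "ord x = p ^ k"
  using ord_dvd_group_order[OF assms(3)] assms(2) divides_primepow_nat[OF assms(1)] by auto

lemma (in group) p_group_ord_dvd_of_le:
  assumes "Factorial_Ring.prime (p::nat)" "order G = p ^ n" "x \<in> carrier G" "y \<in> carrier G"
    and "ord x \<le> ord y"
  shows "ord x dvd ord y"
proof -
  obtain k l where "ord x = p ^ k" "ord y = p ^ l"
    using p_group_ord_eq_prime_power[OF assms(1,2)] assms(3,4) by metis
  with assms(1,5) show ?thesis
    by (metis le_imp_power_dvd power_le_imp_le_exp prime_gt_1_nat)
qed

lemma (in group) ord_pow_ord_div:
  assumes "finite (carrier G)" "x \<in> carrier G" "d dvd ord x"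
  shows "ord (x [^] (ord x div d)) = d"
proof -
  obtain e where e: "ord x = d * e"
    using assms(3) by blast
  moreover have "ord x \<noteq> 0"
    using ord_ge_1[OF assms(1,2)] by simp
  ultimately have "d \<noteq> 0" "e \<noteq> 0" "ord x div d = e"
    by auto
  then show ?thesis
    using ord_pow[OF assms(2), of e] e by simp
qed

lemma (in group) p_group_ord_less_imp_ord_pth_power:
  assumes p: "Factorial_Ring.prime (p::nat)" "order G = p ^ n"
    and a: "a \<in> carrier G" and y: "y \<in> carrier G" and less: "ord y < ord a"
  obtains w where "w \<in> carrier G" "ord (w [^] p) = ord y"
proof -
  obtain k m where k: "ord y = p ^ k" and m: "ord a = p ^ m"
    using p_group_ord_eq_prime_power[OF p] a y by metis
  then have "k < m"
    using less p(1) power_less_imp_less_exp prime_gt_1_nat by auto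
  have "p ^ (m - Suc k) * p = p ^ (m - k)"
    using \<open>k < m\<close> by (simp add: Suc_diff_Suc flip: power_Suc2)
  also have "\<dots> = ord a div ord y"
    using \<open>k < m\<close> k m p(1) by (simp add: power_diff prime_gt_0_nat)
  finally have "(a [^] (p ^ (m - Suc k))) [^] p = a [^] (ord a div ord y)"
    using a by (simp add: nat_pow_pow)
  also have "ord \<dots> = ord y"
    using ord_pow_ord_div[OF finite_carrier_if_order_eq_prime_power[OF p] a] k m \<open>k < m\<close>
    by (simp add: le_imp_power_dvd)
  finally show ?thesis
    using a that by blast
qed

lemma (in group_action) card_fixed_points_mod:
  assumes "finite E" "Factorial_Ring.prime (p::nat)" "order G = p ^ n"
  shows "card {x \<in> E. \<forall>g \<in> carrier G. \<phi> g x = x} mod p = card E mod p"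
proof -
  interpret group G
    using group_hom group_hom.axioms(1) by blast
  define F where "F = {x \<in> E. \<forall>g \<in> carrier G. \<phi> g x = x}"
  have orbit_fixed: "orbit G \<phi> y = {y}" if "y \<in> F" for y
    using that unfolding F_def orbit_def by force
  have "p dvd (\<Sum>x\<in>orb. of_bool (x \<notin> F))" if orb: "orb \<in> orbits G E \<phi>" for orb
  proof -
    obtain x where x: "x \<in> E" "orb = orbit G \<phi> x"
      using orb unfolding orbits_def by blast
    show ?thesis
    proof (cases "orb \<inter> F = {}")
      case False
      then obtain y where y: "y \<in> orb" "y \<in> F" by blast
      then have "x \<in> orbit G \<phi> y"
        using x orbit_sym unfolding F_def by blast
      then have "orb = {y}"
        using x y orbit_fixed by auto
      then show ?thesis
        using y by simp
    next
      case True
      have "card orb \<noteq> 1"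
      proof
        assume "card orb = 1"
        then have "orb = {x}"
          using x orbit_refl by (metis card_1_singletonE singletonD)
        then have "x \<in> F"
          using x unfolding F_def orbit_def by blast
        with True x orbit_refl show False by blast
      qed
      moreover have "card orb dvd p ^ n"
        using orbit_stabilizer_theorem[OF x(1)] x(2) assms(3) by (metis dvd_triv_left)
      ultimately have "p dvd card orb"
        using divides_primepow_nat[OF assms(2)] by (metis dvd_power le_zero_eq power_0 not_gr0)
      moreover have "(\<Sum>x\<in>orb. of_bool (x \<notin> F)) = card orb"
        using True by (simp add: disjoint_iff)
      ultimately show ?thesis by simp
    qed
  qed
  then have "p dvd (\<Sum>x\<in>E. of_bool (x \<notin> F))"
    by (simp add: dvd_sum flip: disjoint_sum[OF assms(1)])
  then obtain k where "card (E - F) = p * k"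
    using assms(1) by (auto simp: Diff_eq Compl_eq elim: dvdE)
  moreover have "card E = card F + card (E - F)"
    using assms(1) card_Diff_subset[of F E] card_mono[of E F] unfolding F_def by fastforce
  ultimately have "card F mod p = card E mod p"
    by simp
  then show ?thesis
    unfolding F_def .
qed

lemma (in group) p_group_center_nontrivial:
  assumes "Factorial_Ring.prime (p::nat)" "order G = p ^ n" "n > 0"
  obtains z where "z \<in> carrier G" "z \<noteq> \<one>" "\<forall>g \<in> carrier G. z \<otimes> g = g \<otimes> z"
proof -
  have fin: "finite (carrier G)"
    using finite_carrier_if_order_eq_prime_power[OF assms(1,2)] .
  interpret conj: group_action G "carrier G" "\<lambda>g. \<lambda>h \<in> carrier G. g \<otimes> h \<otimes> inv g"
    by (rule action_by_conjugation)
  define Z where "Z = {x \<in> carrier G. \<forall>g \<in> carrier G. (\<lambda>h \<in> carrier G. g \<otimes> h \<otimes> inv g) x = x}"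
  have "card Z mod p = 0"
    using conj.card_fixed_points_mod[OF fin assms(1,2)] assms(2,3)
    unfolding Z_def order_def by simp
  moreover have "card {\<one>} mod p \<noteq> 0"
    using prime_gt_1_nat[OF assms(1)] by simp
  ultimately have "Z \<noteq> {\<one>}" by auto
  moreover have "\<one> \<in> Z"
    unfolding Z_def by simp
  ultimately obtain z where z: "z \<in> Z" "z \<noteq> \<one>" by blast
  have "z \<otimes> g = g \<otimes> z" if g: "g \<in> carrier G" for g
  proof -
    have "g \<otimes> z \<otimes> inv g = z"
      using z(1) g unfolding Z_def by auto
    then show ?thesis
      using z(1) g unfolding Z_def by (simp add: inv_solve_right')
  qed
  with z that show ?thesis
    unfolding Z_def by blast
qed

section \<open>The upper central series\<close>

text \<open>\<open>center_mod G N\<close> is the preimage of the centre of \<open>G/N\<close>, described without the quotient.\<close>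

definition center_mod :: "('a, 'b) monoid_scheme \<Rightarrow> 'a set \<Rightarrow> 'a set" where
  "center_mod G N = {x \<in> carrier G. \<forall>g \<in> carrier G. commutator G x g \<in> N}"

lemma (in group) center_mod_normal:
  assumes "N \<lhd> G"
  shows "center_mod G N \<lhd> G"
proof -
  interpret N: normal N G by fact
  have conj_closed: "h \<otimes> n \<otimes> inv h \<in> N" if "h \<in> carrier G" "n \<in> N" for h n
    using that assms normal_inv_iff by blast
  have "subgroup (center_mod G N) G"
  proof (rule subgroupI)
    show "center_mod G N \<noteq> {}"
      using N.one_closed by (auto intro!: exI[of _ \<one>] simp: center_mod_def commutator_def)
    show "inv x \<in> center_mod G N" if "x \<in> center_mod G N" for x
      using that conj_closed[of "inv x" "inv (commutator G x g)" for g]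
      by (simp add: center_mod_def commutator_inv_left N.m_inv_closed)
    show "x \<otimes> y \<in> center_mod G N" if "x \<in> center_mod G N" "y \<in> center_mod G N" for x y
      using that conj_closed[of x "commutator G y g" for g]
      by (simp add: center_mod_def commutator_mult_left N.m_closed)
  qed (auto simp: center_mod_def)
  moreover have "h \<otimes> x \<otimes> inv h \<in> center_mod G N" if "h \<in> carrier G" "x \<in> center_mod G N" for h x
    using that conj_closed[of h "commutator G x (inv h \<otimes> g \<otimes> h)" for g]
    by (simp add: center_mod_def commutator_conj_left)
  ultimately show ?thesis
    by (simp add: normal_inv_iff)
qed

lemma (in group) normal_subset_center_mod:
  assumes "N \<lhd> G"
  shows "N \<subseteq> center_mod G N"
  unfolding center_mod_def
proof (intro subsetI CollectI conjI ballI)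
  interpret N: normal N G by fact
  fix x assume x: "x \<in> N"
  then show "x \<in> carrier G" by simp
  fix g assume g: "g \<in> carrier G"
  have "g \<otimes> inv x \<otimes> inv g \<in> N"
    using assms g x normal_inv_iff by simp
  then have "x \<otimes> (g \<otimes> inv x \<otimes> inv g) \<in> N"
    by (rule N.m_closed[OF x])
  then show "commutator G x g \<in> N"
    using x g by (simp add: commutator_def m_assoc)
qed

lemma (in normal) commutator_mem_iff:
  assumes "x \<in> carrier G" "g \<in> carrier G"
  shows "commutator G x g \<in> H \<longleftrightarrow>
         (H #> x) \<otimes>\<^bsub>G Mod H\<^esub> (H #> g) = (H #> g) \<otimes>\<^bsub>G Mod H\<^esub> (H #> x)"
proof -
  interpret Q: group_hom G "G Mod H" "\<lambda>a. H #> a"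
    using r_coset_hom_Mod factorgroup_is_group by (simp add: group_hom_def group_hom_axioms_def)
  have "commutator G x g \<in> H \<longleftrightarrow> H #> commutator G x g = H"
    using assms rcos_const[OF is_group] rcos_self[OF _ subgroup_axioms] by force
  also have "\<dots> \<longleftrightarrow> commutator (G Mod H) (H #> x) (H #> g) = \<one>\<^bsub>G Mod H\<^esub>"
    using assms by (simp add: Q.hom_commutator)
  also have "\<dots> \<longleftrightarrow> (H #> x) \<otimes>\<^bsub>G Mod H\<^esub> (H #> g) = (H #> g) \<otimes>\<^bsub>G Mod H\<^esub> (H #> x)"
    using Q.hom_closed[OF assms(1)] Q.hom_closed[OF assms(2)] by (rule Q.H.commutator_eq_one_iff)
  finally show ?thesis .
qed

lemma (in group) p_group_psubset_center_mod:
  assumes "Factorial_Ring.prime (p::nat)" "order G = p ^ n" "N \<lhd> G" "N \<noteq> carrier G"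
  shows "N \<subset> center_mod G N"
proof -
  interpret N: normal N G by fact
  have "card (rcosets N) * card N = p ^ n"
    using lagrange[OF N.subgroup_axioms] assms(2) by simp
  then obtain m where m: "card (rcosets N) = p ^ m"
    using divides_primepow_nat[OF assms(1)] by (metis dvd_triv_left)
  have "m \<noteq> 0"
  proof
    assume "m = 0"
    then have "card N = card (carrier G)"
      using lagrange[OF N.subgroup_axioms] m by (simp add: order_def)
    then show False
      using assms(4) card_subset_eq[OF finite_carrier_if_order_eq_prime_power[OF assms(1,2)] N.subset]
      by simp
  qed
  moreover have "order (G Mod N) = p ^ m"
    using m by (simp add: order_def FactGroup_def)
  ultimately obtain z where z: "z \<in> carrier (G Mod N)" "z \<noteq> N"
    "\<forall>Y \<in> carrier (G Mod N). z \<otimes>\<^bsub>G Mod N\<^esub> Y = Y \<otimes>\<^bsub>G Mod N\<^esub> z"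
    using group.p_group_center_nontrivial[OF N.factorgroup_is_group assms(1)] by auto
  obtain x where x: "x \<in> carrier G" "z = N #> x"
    using z(1) unfolding carrier_FactGroup by blast
  have "x \<notin> N"
    using z(2) x N.rcos_const[OF is_group] by blast
  moreover have "x \<in> center_mod G N"
    using z(3) x N.commutator_mem_iff by (simp add: center_mod_def carrier_FactGroup)
  ultimately show ?thesis
    using normal_subset_center_mod[OF assms(3)] by blast
qed

primrec upper_central_series :: "('a, 'b) monoid_scheme \<Rightarrow> nat \<Rightarrow> 'a set" where
  "upper_central_series G 0 = {\<one>\<^bsub>G\<^esub>}"
| "upper_central_series G (Suc i) = center_mod G (upper_central_series G i)"

lemma (in group) upper_central_series_normal: "upper_central_series G i \<lhd> G"
  by (induction i) (simp_all add: one_is_normal center_mod_normal)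

lemma (in group) p_group_upper_central_series_eq_carrier:
  assumes "Factorial_Ring.prime (p::nat)" "order G = p ^ n"
  obtains i where "upper_central_series G i = carrier G"
proof (rule ccontr)
  assume "\<not> thesis"
  then have ne: "upper_central_series G i \<noteq> carrier G" for i
    using that by blast
  have fin: "finite (carrier G)"
    using finite_carrier_if_order_eq_prime_power[OF assms] .
  have sub: "upper_central_series G i \<subseteq> carrier G" for i
    using upper_central_series_normal normal_imp_subgroup subgroup.subset by blast
  have "i < card (upper_central_series G i)" for i
  proof (induction i)
    case 0
    then show ?case by simp
  next
    case (Suc i)
    have "upper_central_series G i \<subset> upper_central_series G (Suc i)"
      using p_group_psubset_center_mod[OF assms upper_central_series_normal ne] by simp
    then have "card (upper_central_series G i) < card (upper_central_series G (Suc i))"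
      by (rule psubset_card_mono[OF finite_subset[OF sub fin]])
    with Suc.IH show ?case
      by simp
  qed
  then have "card (carrier G) < card (upper_central_series G (card (carrier G)))" .
  with card_mono[OF fin sub, of "card (carrier G)"] show False
    by simp
qed

section \<open>1-tuple regular groups\<close>

lemma (in group) one_tuple_regularE:
  assumes "one_tuple_regular G" "g1 \<in> carrier G" "h1 \<in> carrier G" "ord g1 = ord h1"
    and "g \<in> carrier G"
  obtains h \<phi> where "h \<in> carrier G"
    "\<phi> \<in> iso (subgroup_generated G {g1, g}) (subgroup_generated G {h1, h})"
    "\<phi> g1 = h1" "\<phi> g = h"
  using assms unfolding one_tuple_regular_def bij_betw_def by blast

lemma (in group) one_tuple_regular_ord_commutator:
  assumes "one_tuple_regular G" "g1 \<in> carrier G" "h1 \<in> carrier G" "ord g1 = ord h1"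
    and "g \<in> carrier G"
  obtains h where "h \<in> carrier G" "ord (commutator G h1 h) = ord (commutator G g1 g)"
proof -
  obtain h \<phi> where h: "h \<in> carrier G"
    and \<phi>: "\<phi> \<in> iso (subgroup_generated G {g1, g}) (subgroup_generated G {h1, h})"
      "\<phi> g1 = h1" "\<phi> g = h"
    using one_tuple_regularE[OF assms] .
  let ?S = "subgroup_generated G {g1, g}"
  have gens: "g1 \<in> carrier ?S" "g \<in> carrier ?S"
    using assms(2,5) subgroup_generated_subset_carrier_subset[of "{g1, g}"] by auto
  have "commutator G g1 g \<in> carrier ?S"
    using group.commutator_closed[OF group_subgroup_generated gens]
    by (simp add: commutator_subgroup_generated gens)
  then have "ord (\<phi> (commutator G g1 g)) = ord (commutator G g1 g)"
    by (rule ord_iso_subgroup_generated[OF \<phi>(1)])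
  moreover have "\<phi> (commutator G g1 g) = commutator G h1 h"
    using hom_subgroup_generated_commutator[OF iso_imp_homomorphism[OF \<phi>(1)] gens] \<phi> by simp
  ultimately show ?thesis
    using that h by simp
qed

lemma (in group) one_tuple_regular_nat_pow:
  assumes "one_tuple_regular G" "w \<in> carrier G" "y \<in> carrier G" "ord (w [^] n) = ord y"
  obtains z where "z \<in> carrier G" "y = z [^] (n::nat)"
proof -
  obtain z \<phi> where z: "z \<in> carrier G"
    and \<phi>: "\<phi> \<in> iso (subgroup_generated G {w [^] n, w}) (subgroup_generated G {y, z})"
      "\<phi> (w [^] n) = y" "\<phi> w = z"
    using one_tuple_regularE[OF assms(1) _ assms(3,4) assms(2)] assms(2) by blast
  have "w \<in> carrier (subgroup_generated G {w [^] n, w})"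
    using assms(2) subgroup_generated_subset_carrier_subset[of "{w [^] n, w}"] by auto
  then have "y = z [^] n"
    using hom_subgroup_generated_nat_pow[OF iso_imp_homomorphism[OF \<phi>(1)]] \<phi> by simp
  with z that show ?thesis by blast
qed

lemma (in group) one_tuple_regular_ord_commutator_less_center_mod:
  assumes p: "Factorial_Ring.prime (p::nat)" "order G = p ^ n" and reg: "one_tuple_regular G"
    and N: "subgroup N G" "\<forall>c \<in> N. c \<noteq> \<one> \<longrightarrow> (\<forall>h \<in> carrier G. ord (commutator G c h) < ord c)"
    and x: "x \<in> center_mod G N" "x \<noteq> \<one>" and b: "b \<in> carrier G"
  shows "ord (commutator G x b) < ord x"
proof (rule ccontr)
  let ?u = "commutator G x b"
  assume "\<not> ord ?u < ord x"
  have xG: "x \<in> carrier G" and u: "?u \<in> N"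
    using x(1) b by (auto simp: center_mod_def)
  have uG: "?u \<in> carrier G"
    using xG b by simp
  have "ord x dvd ord ?u"
    using p_group_ord_dvd_of_le[OF p xG uG] \<open>\<not> ord ?u < ord x\<close> by simp
  define c where "c = ?u [^] (ord ?u div ord x)"
  have ord_c: "ord c = ord x"
    unfolding c_def
    using ord_pow_ord_div[OF finite_carrier_if_order_eq_prime_power[OF p] uG \<open>ord x dvd ord ?u\<close>] .
  have cG: "c \<in> carrier G"
    unfolding c_def using uG by simp
  have "c \<in> N"
    unfolding c_def using subgroup_int_pow_closed[OF N(1) u] by (metis int_pow_int)
  moreover have "c \<noteq> \<one>"
    using ord_c x(2) ord_eq_1 xG cG by metis
  moreover obtain h where "h \<in> carrier G" "ord (commutator G c h) = ord ?u"
    using one_tuple_regular_ord_commutator[OF reg xG cG ord_c[symmetric] b] .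
  ultimately have "ord ?u < ord c"
    using N(2) by metis
  with \<open>\<not> ord ?u < ord x\<close> ord_c show False
    by simp
qed

lemma (in group) one_tuple_regular_ord_commutator_less:
  assumes p: "Factorial_Ring.prime (p::nat)" "order G = p ^ n" and reg: "one_tuple_regular G"
    and "x \<in> carrier G" "x \<noteq> \<one>" "b \<in> carrier G"
  shows "ord (commutator G x b) < ord x"
proof -
  have "\<forall>x \<in> upper_central_series G i. x \<noteq> \<one> \<longrightarrow>
          (\<forall>b \<in> carrier G. ord (commutator G x b) < ord x)" for i
  proof (induction i)
    case 0
    then show ?case by simp
  next
    case (Suc i)
    then show ?case
      using one_tuple_regular_ord_commutator_less_center_mod[OF p reg
          normal_imp_subgroup[OF upper_central_series_normal]]
      by simp
  qed
  moreover obtain i where "upper_central_series G i = carrier G"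
    using p_group_upper_central_series_eq_carrier[OF p] .
  ultimately show ?thesis
    using assms(4-) by blast
qed

lemma (in group) one_tuple_regular_commutator_pth_power:
  assumes p: "Factorial_Ring.prime (p::nat)" "order G = p ^ n" and reg: "one_tuple_regular G"
    and a: "a \<in> carrier G" and b: "b \<in> carrier G"
  obtains z where "z \<in> carrier G" "commutator G a b = z [^] p"
proof (cases "a = \<one>")
  case True
  then have "commutator G a b = \<one> [^] p"
    using b by (simp add: commutator_def)
  with that show ?thesis by blast
next
  case False
  let ?y = "commutator G a b"
  have yG: "?y \<in> carrier G"
    using a b by simp
  obtain w where "w \<in> carrier G" "ord (w [^] p) = ord ?y"
    using p_group_ord_less_imp_ord_pth_power[OF p a yG]
      one_tuple_regular_ord_commutator_less[OF p reg a False b] by blast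
  with one_tuple_regular_nat_pow[OF reg _ yG] that show ?thesis
    by blast
qed

lemma (in group) one_tuple_regular_derived_subset_agemo:
  assumes "Factorial_Ring.prime (p::nat)" "order G = p ^ n" "one_tuple_regular G"
  shows "derived G (carrier G) \<subseteq> agemo G p 1"
proof -
  have "derived_set G (carrier G) \<subseteq> {x [^] (p ^ 1) | x. x \<in> carrier G}"
  proof
    fix y assume "y \<in> derived_set G (carrier G)"
    then obtain a b where "a \<in> carrier G" "b \<in> carrier G" "y = commutator G a b"
      by (auto simp: commutator_def)
    then obtain z where "z \<in> carrier G" "y = z [^] p"
      using one_tuple_regular_commutator_pth_power[OF assms] by metis
    then show "y \<in> {x [^] (p ^ 1) | x. x \<in> carrier G}"
      by auto
  qed
  then show ?thesis
    unfolding derived_def agemo_def by (rule mono_generate)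
qed

theorem lemma4p4:
  fixes G (structure) and p s :: nat
  assumes "Factorial_Ring.prime p"
    and "group G"
    and "finite (carrier G)"
    and "group_exponent G = p ^ s"
    and "one_tuple_regular G"
  shows "(\<forall>a \<in> carrier G. \<forall>b \<in> carrier G. a \<noteq> \<one> \<longrightarrow> b \<noteq> \<one> \<longrightarrow>
            group.ord G (commutator G a b) < min (group.ord G a) (group.ord G b))
         \<and> (odd p \<longrightarrow> powerful_p_group G p)"
proof -
  interpret group G by fact
  obtain n where p_group: "order G = p ^ n"
    using order_eq_prime_power_if_group_exponent[OF assms(3,1,4)] .
  note ord_less = one_tuple_regular_ord_commutator_less[OF assms(1) p_group assms(5)]
  have "ord (commutator G a b) < min (ord a) (ord b)"
    if "a \<in> carrier G" "b \<in> carrier G" "a \<noteq> \<one>" "b \<noteq> \<one>" for a b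
    using ord_less[of a b] ord_less[of b a] that
    by (metis inv_commutator ord_inv commutator_closed min_less_iff_conj)
  moreover have "powerful_p_group G p" if "odd p"
    using one_tuple_regular_derived_subset_agemo[OF assms(1) p_group assms(5)] assms(3) p_group that
    unfolding powerful_p_group_def by auto
  ultimately show ?thesis
    by blast
qed

end
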